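(* Let $(P,\omega)$ be a sign-graded labeled poset of rank $r$ with $p=|P|$ and $\omega$ canonical, and let $\pi\in\mathcal{L}(P,\omega)$. Let $\hat\pi$ be the element of $\operatorname{Orb}(\pi)$ such that $0\hat\pi0$ has no double descents. Then $$\sum_{\sigma\in\operatorname{Orb}(\pi)}t^{\operatorname{des}(\sigma)}=t^{\operatorname{des}(\hat\pi)}(1+t)^{p-r-1-2\operatorname{des}(\hat\pi)}.$$ Moreover, if $r=0$ then $\operatorname{peak}$ is constant on each orbit of the $\mathbb{Z}_2^P$-action and $\operatorname{peak}(\pi)=\operatorname{des}(\hat\pi)$ for all $\pi\in\mathcal{L}(P,\omega)$.
   Context: A labeled poset is a finite poset $P$ with an injection $\omega:P\to\mathbb{Z}$. Its Jordan–Hölder set $\mathcal{L}(P,\omega)$ is the set of words $\pi=a_1\cdots a_p$ that are permutations of $\omega(P)$ such that $x<_Py$ implies $\omega(x)$ precedes $\omega(y)$. For a cover relation $x\lessdot y$ in $P$ let $\epsilon(x,y)=1$ if $\omega(x)<\omega(y)$ and $-1$ otherwise. $(P,\omega)$ is sign-graded if for every maximal chain $x_1<x_2<\cdots<x_k$ the sum $\sum_{i=2}^k\epsilon(x_{i-1},x_i)$ is the same; this common value $r$ is the rank, and $\rho(x)$ is this sum along any saturated chain from a minimal element to $x$. The labeling $\omega$ is canonical if $(P,\omega)$ is sign-graded, $\rho$ takes values in $\{0,1\}$, elements of rank $0$ have negative labels and elements of rank $1$ have positive labels. For $\pi=a_1\cdots a_p$, $\operatorname{des}(\pi)=|\{i\in[p-1]:a_i>a_{i+1}\}|$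 and $\operatorname{peak}(\pi)=|\{2\le i\le p-1:a_{i-1}<a_i>a_{i+1}\}|$. Set $a_0=a_{p+1}=0$; double ascents/descents, peaks and valleys of letters $a_k$ ($k\in[p]$) are taken in $0\pi0$ ($a_{k-1}<a_k<a_{k+1}$, $a_{k-1}>a_k>a_{k+1}$, $a_{k-1}<a_k>a_{k+1}$, $a_{k-1}>a_k<a_{k+1}$ respectively). For $x\in\omega(P)$ define $\psi_x(\pi)$: if $x<0$ is a double descent, move $x$ to between the first pair of consecutive letters $a_i,a_{i+1}$ to the right of $x$ with $a_i<x<a_{i+1}$; if $x<0$ is a double ascent, move $x$ to between the first pair to the left with $a_i>x>a_{i+1}$; if $x>0$ is a double descent, move $x$ to between the first pair to the left with $a_i<x<a_{i+1}$; if $x>0$ is a double ascent, move $x$ to between the first pair to the right with $a_i>x>a_{i+1}$; if $x$ is a peak or valley, $\psi_x(\pi)=\pi$. These maps send $\mathcal{L}(P,\omega)$ to itself and define a $\mathbb{Z}_2^P$-action $\psi_S(\pi)=\prod_{x\in S}\psi_{\omega(x)}(\pi)$, $S\subseteq P$; $\operatorname{Orb}(\pi)$ is the orbit of $\pi$, and it contains a unique element $\hat\pi$ with $0\hat\pi0$ having no double descents. *)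

theory Defs
  imports Complex_Main
begin

definition strict_poset_on :: "'a set \<Rightarrow> ('a \<Rightarrow> 'a \<Rightarrow> bool) \<Rightarrow> bool" where
  "strict_poset_on P lt \<longleftrightarrow>
     (\<forall>x\<in>P. \<not> lt x x) \<and>
     (\<forall>x\<in>P. \<forall>y\<in>P. \<forall>z\<in>P. lt x y \<longrightarrow> lt y z \<longrightarrow> lt x z)"

definition covers :: "'a set \<Rightarrow> ('a \<Rightarrow> 'a \<Rightarrow> bool) \<Rightarrow> 'a \<Rightarrow> 'a \<Rightarrow> bool" where
  "covers P lt x y \<longleftrightarrow> x \<in> P \<and> y \<in> P \<and> lt x y \<and>
     \<not> (\<exists>z\<in>P. lt x z \<and> lt z y)"

definition minimal_in :: "'a set \<Rightarrow> ('a \<Rightarrow> 'a \<Rightarrow> bool) \<Rightarrow> 'a \<Rightarrow> bool" where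
  "minimal_in P lt x \<longleftrightarrow> x \<in> P \<and> \<not> (\<exists>y\<in>P. lt y x)"

definition maximal_in :: "'a set \<Rightarrow> ('a \<Rightarrow> 'a \<Rightarrow> bool) \<Rightarrow> 'a \<Rightarrow> bool" where
  "maximal_in P lt x \<longleftrightarrow> x \<in> P \<and> \<not> (\<exists>y\<in>P. lt x y)"

definition sat_chain_from_min :: "'a set \<Rightarrow> ('a \<Rightarrow> 'a \<Rightarrow> bool) \<Rightarrow> 'a list \<Rightarrow> bool" where
  "sat_chain_from_min P lt c \<longleftrightarrow> c \<noteq> [] \<and> minimal_in P lt (hd c) \<and>
     (\<forall>i. i + 1 < length c \<longrightarrow> covers P lt (c ! i) (c ! (i + 1)))"

definition maximal_chain :: "'a set \<Rightarrow> ('a \<Rightarrow> 'a \<Rightarrow> bool) \<Rightarrow> 'a list \<Rightarrow> bool" where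
  "maximal_chain P lt c \<longleftrightarrow> sat_chain_from_min P lt c \<and> maximal_in P lt (last c)"

definition eps :: "('a \<Rightarrow> int) \<Rightarrow> 'a \<Rightarrow> 'a \<Rightarrow> int" where
  "eps \<omega> x y = (if \<omega> x < \<omega> y then 1 else -1)"

definition eps_sum :: "('a \<Rightarrow> int) \<Rightarrow> 'a list \<Rightarrow> int" where
  "eps_sum \<omega> c = (\<Sum>i<length c - 1. eps \<omega> (c ! i) (c ! (i + 1)))"

definition sign_graded_rank :: "'a set \<Rightarrow> ('a \<Rightarrow> 'a \<Rightarrow> bool) \<Rightarrow> ('a \<Rightarrow> int) \<Rightarrow> int \<Rightarrow> bool" where
  "sign_graded_rank P lt \<omega> r \<longleftrightarrow> (\<forall>c. maximal_chain P lt c \<longrightarrow> eps_sum \<omega> c = r)"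

definition sign_graded :: "'a set \<Rightarrow> ('a \<Rightarrow> 'a \<Rightarrow> bool) \<Rightarrow> ('a \<Rightarrow> int) \<Rightarrow> bool" where
  "sign_graded P lt \<omega> \<longleftrightarrow> (\<exists>r. sign_graded_rank P lt \<omega> r)"

definition rho :: "'a set \<Rightarrow> ('a \<Rightarrow> 'a \<Rightarrow> bool) \<Rightarrow> ('a \<Rightarrow> int) \<Rightarrow> 'a \<Rightarrow> int" where
  "rho P lt \<omega> x = (THE v. \<forall>c. sat_chain_from_min P lt c \<and> last c = x \<longrightarrow> eps_sum \<omega> c = v)"

definition canonical :: "'a set \<Rightarrow> ('a \<Rightarrow> 'a \<Rightarrow> bool) \<Rightarrow> ('a \<Rightarrow> int) \<Rightarrow> bool" where
  "canonical P lt \<omega> \<longleftrightarrow> sign_graded P lt \<omega> \<and>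
     (\<forall>x\<in>P. rho P lt \<omega> x \<in> {0, 1}) \<and>
     (\<forall>x\<in>P. rho P lt \<omega> x = 0 \<longrightarrow> \<omega> x < 0) \<and>
     (\<forall>x\<in>P. rho P lt \<omega> x = 1 \<longrightarrow> \<omega> x > 0)"

definition JH :: "'a set \<Rightarrow> ('a \<Rightarrow> 'a \<Rightarrow> bool) \<Rightarrow> ('a \<Rightarrow> int) \<Rightarrow> int list set" where
  "JH P lt \<omega> = {w. distinct w \<and> set w = \<omega> ` P \<and>
     (\<forall>x\<in>P. \<forall>y\<in>P. lt x y \<longrightarrow>
        (\<exists>i j. i < j \<and> j < length w \<and> w ! i = \<omega> x \<and> w ! j = \<omega> y))}"

definition des :: "int list \<Rightarrow> nat" where
  "des w = card {i. i + 1 < length w \<and> w ! i > w ! (i + 1)}"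

definition peak :: "int list \<Rightarrow> nat" where
  "peak w = card {i. 0 < i \<and> i + 1 < length w \<and> w ! (i - 1) < w ! i \<and> w ! i > w ! (i + 1)}"

definition pad :: "int list \<Rightarrow> int list" where
  "pad w = 0 # w @ [0]"

definition no_dd :: "int list \<Rightarrow> bool" where
  "no_dd w \<longleftrightarrow> \<not> (\<exists>k. 0 < k \<and> k + 1 < length (pad w) \<and>
       pad w ! (k - 1) > pad w ! k \<and> pad w ! k > pad w ! (k + 1))"

text \<open>In a padded word L, move the letter at position k to between positions i and i+1
  (i > k, resp. i + 1 < k).\<close>
definition move_right :: "int list \<Rightarrow> nat \<Rightarrow> nat \<Rightarrow> int list" where
  "move_right L k i = take k L @ take (i - k) (drop (k + 1) L) @ [L ! k] @ drop (i + 1) L"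

definition move_left :: "int list \<Rightarrow> nat \<Rightarrow> nat \<Rightarrow> int list" where
  "move_left L k i = take (i + 1) L @ [L ! k] @ take (k - i - 1) (drop (i + 1) L) @ drop (k + 1) L"

definition strip :: "int list \<Rightarrow> int list" where
  "strip L = butlast (tl L)"

definition psi :: "int \<Rightarrow> int list \<Rightarrow> int list" where
  "psi x w = (let L = pad w; k = (LEAST k. 0 < k \<and> L ! k = x) in
     if x \<notin> set w then w
     else if L ! (k - 1) > x \<and> x > L ! (k + 1) then
       (if x < 0 then
          strip (move_right L k (LEAST i. k < i \<and> i + 1 < length L \<and> L ! i < x \<and> x < L ! (i + 1)))
        else
          strip (move_left L k (GREATEST i. i + 1 < k \<and> L ! i < x \<and> x < L ! (i + 1))))
     else if L ! (k - 1) < x \<and> x < L ! (k + 1) then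
       (if x < 0 then
          strip (move_left L k (GREATEST i. i + 1 < k \<and> L ! i > x \<and> x > L ! (i + 1)))
        else
          strip (move_right L k (LEAST i. k < i \<and> i + 1 < length L \<and> L ! i > x \<and> x > L ! (i + 1))))
     else w)"

definition psiS :: "('a \<Rightarrow> int) \<Rightarrow> 'a set \<Rightarrow> int list \<Rightarrow> int list" where
  "psiS \<omega> S w = fold psi (sorted_list_of_set (\<omega> ` S)) w"

definition Orb :: "'a set \<Rightarrow> ('a \<Rightarrow> int) \<Rightarrow> int list \<Rightarrow> int list set" where
  "Orb P \<omega> w = {psiS \<omega> S w | S. S \<subseteq> P}"

end

theory Submission
  imports Defs
begin

(* Read a word w of distinct nonzero integers inside 0w0.  Each letter y carries two bits: whether
   its left neighbour is smaller and whether its right neighbour is smaller; peaks, valleys, double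
   ascents and double descents are the four combinations.  Call z beyond x if x lies strictly
   between 0 and z.  For a double ascent or double descent x, psi_x moves x across the maximal run
   of letters beyond x next to it; this swaps the two bits of x and keeps the bits of every other
   letter as well as the signs of the first and the last letter.  Hence along an orbit the peaks and
   the set D of double letters are fixed, the set of double descents identifies the orbit with the
   subsets of D, and des = #peaks + #double descents - [last letter > 0].
   For a canonical labeling the first letter of a linear extension is negative and the last one has
   the sign of the rank r, which is 0 or 1.  Counting the ascents of the element without double
   descents gives |D| = p - r - 1 - 2 des, and summing t^des over the subsets of D gives the
   generating function.  If r = 0 both end letters are negative, so peak counts the peak letters,
   which are the same all along the orbit. *)

section \<open>Letters of 0w0 and their neighbours\<close>

definition distinct_nonzero :: "int list \<Rightarrow> bool" where
  "distinct_nonzero w \<longleftrightarrow> distinct w \<and> 0 \<notin> set w"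

definition left_nbr :: "int list \<Rightarrow> int \<Rightarrow> int" where
  "left_nbr L y = last (takeWhile (\<lambda>z. z \<noteq> y) L)"

definition right_nbr :: "int list \<Rightarrow> int \<Rightarrow> int" where
  "right_nbr L y = hd (tl (dropWhile (\<lambda>z. z \<noteq> y) L))"

(* In 0w0 the letter y is a peak, a valley, a double ascent or a double descent according as
   both, neither, only ascent_into or only descent_from hold. *)
definition ascent_into :: "int list \<Rightarrow> int \<Rightarrow> bool" where
  "ascent_into w y \<longleftrightarrow> left_nbr (pad w) y < y"

definition descent_from :: "int list \<Rightarrow> int \<Rightarrow> bool" where
  "descent_from w y \<longleftrightarrow> right_nbr (pad w) y < y"

definition peak_letters :: "int list \<Rightarrow> int set" where
  "peak_letters w = {y \<in> set w. ascent_into w y \<and> descent_from w y}"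

definition double_descent_letters :: "int list \<Rightarrow> int set" where
  "double_descent_letters w = {y \<in> set w. \<not> ascent_into w y \<and> descent_from w y}"

definition double_letters :: "int list \<Rightarrow> int set" where
  "double_letters w = {y \<in> set w. ascent_into w y \<noteq> descent_from w y}"

lemma length_pad [simp]: "length (pad w) = length w + 2"
  by (simp add: pad_def)

lemma pad_nth_0 [simp]: "pad w ! 0 = 0"
  by (simp add: pad_def)

lemma pad_nth_Suc [simp]: "i < length w \<Longrightarrow> pad w ! Suc i = w ! i"
  by (simp add: pad_def nth_append)

lemma pad_nth_Suc_length [simp]: "pad w ! Suc (length w) = 0"
  by (simp add: pad_def nth_append)

lemma strip_pad [simp]: "strip (pad w) = w"
  by (simp add: strip_def pad_def)

lemma pad_nth_eq_nth_iff:
  assumes "distinct_nonzero w" "j < length w" "m < length w + 2"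
  shows "pad w ! m = w ! j \<longleftrightarrow> m = Suc j"
proof -
  have "w ! j \<noteq> 0"
    using assms nth_mem by (metis distinct_nonzero_def)
  then have edge: "pad w ! m \<noteq> w ! j" if "m = 0 \<or> m = Suc (length w)"
    using that by auto
  have inner: "pad w ! Suc i = w ! j \<longleftrightarrow> i = j" if "i < length w" for i
    using that assms by (simp add: distinct_nonzero_def nth_eq_iff_index_eq)
  show ?thesis
  proof (cases m)
    case (Suc i)
    then have "i < length w \<or> m = Suc (length w)"
      using assms(3) by auto
    then show ?thesis
      using Suc inner edge assms(2) by auto
  qed (use edge in auto)
qed

lemma nbr_pad_append:
  assumes "y \<notin> set U" "y \<noteq> 0"
  shows "left_nbr (pad (U @ y # V)) y = last (0 # U)"
    and "right_nbr (pad (U @ y # V)) y = hd (V @ [0])"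
proof -
  have w: "pad (U @ y # V) = (0 # U) @ y # (V @ [0])"
    by (simp add: pad_def)
  have "takeWhile (\<lambda>z. z \<noteq> y) ((0 # U) @ y # (V @ [0])) = 0 # U"
    using assms by (subst takeWhile_append2) auto
  then show "left_nbr (pad (U @ y # V)) y = last (0 # U)"
    unfolding left_nbr_def w by simp
  have "dropWhile (\<lambda>z. z \<noteq> y) ((0 # U) @ y # (V @ [0])) = y # V @ [0]"
    using assms by (subst dropWhile_append2) auto
  then show "right_nbr (pad (U @ y # V)) y = hd (V @ [0])"
    unfolding right_nbr_def w by simp
qed

lemma last_0_take_eq_pad_nth: "j \<le> length w \<Longrightarrow> last (0 # take j w) = pad w ! j"
  by (cases j) (auto simp: last_conv_nth min_def)

lemma hd_drop_0_eq_pad_nth: "i \<le> length w \<Longrightarrow> hd (drop i w @ [0]) = pad w ! Suc i"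
  by (cases "i = length w") (auto simp: hd_drop_conv_nth)

lemma nbr_pad_nth:
  assumes "distinct_nonzero w" "j < length w"
  shows "left_nbr (pad w) (w ! j) = pad w ! j"
    and "right_nbr (pad w) (w ! j) = pad w ! Suc (Suc j)"
proof -
  have w: "w = take j w @ w ! j # drop (Suc j) w"
    using assms(2) by (simp add: id_take_nth_drop)
  have "w ! j \<notin> set (take j w)" "w ! j \<noteq> 0"
    using assms by (auto simp: distinct_nonzero_def in_set_conv_nth nth_eq_iff_index_eq)
  note nbr = nbr_pad_append[OF this, of "drop (Suc j) w", folded w]
  show "left_nbr (pad w) (w ! j) = pad w ! j"
    using nbr(1) last_0_take_eq_pad_nth[of j w] assms(2) by simp
  show "right_nbr (pad w) (w ! j) = pad w ! Suc (Suc j)"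
    using nbr(2) hd_drop_0_eq_pad_nth[of "Suc j" w] assms(2) by simp
qed

lemma ascent_into_nth:
  "distinct_nonzero w \<Longrightarrow> i < length w \<Longrightarrow>
     ascent_into w (w ! i) \<longleftrightarrow> (if i = 0 then 0 else w ! (i - 1)) < w ! i"
  by (cases i) (simp_all add: ascent_into_def nbr_pad_nth)

lemma descent_from_nth:
  "distinct_nonzero w \<Longrightarrow> i < length w \<Longrightarrow>
     descent_from w (w ! i) \<longleftrightarrow> (if i + 1 = length w then 0 else w ! (i + 1)) < w ! i"
  by (auto simp: descent_from_def nbr_pad_nth)

section \<open>Moving a letter across a block\<close>

(* In all four cases of psi_def, psi_x moves x towards the neighbour that lies beyond x, across
   the maximal run of letters beyond x. *)
definition beyond :: "int \<Rightarrow> int \<Rightarrow> bool" where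
  "beyond x z \<longleftrightarrow> (x < 0 \<and> z < x) \<or> (0 < x \<and> x < z)"

definition beyond_block :: "int \<Rightarrow> int list \<Rightarrow> int list \<Rightarrow> int list \<Rightarrow> bool" where
  "beyond_block x A B C \<longleftrightarrow> B \<noteq> [] \<and> beyond x (hd B) \<and> beyond x (last B) \<and>
     \<not> beyond x (last (0 # A)) \<and> \<not> beyond x (hd (C @ [0]))"

definition same_frame :: "int list \<Rightarrow> int list \<Rightarrow> bool" where
  "same_frame w w' \<longleftrightarrow> distinct_nonzero w' \<and> set w' = set w \<and>
     (hd w' < 0 \<longleftrightarrow> hd w < 0) \<and> (0 < last w' \<longleftrightarrow> 0 < last w)"

definition swaps_bits :: "int set \<Rightarrow> int list \<Rightarrow> int list \<Rightarrow> bool" where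
  "swaps_bits X w w' \<longleftrightarrow> same_frame w w' \<and> (\<forall>y\<in>set w.
     (ascent_into w' y \<longleftrightarrow> (if y \<in> X then descent_from w y else ascent_into w y)) \<and>
     (descent_from w' y \<longleftrightarrow> (if y \<in> X then ascent_into w y else descent_from w y)))"

lemma swaps_bits_refl:
  assumes "distinct_nonzero w" "\<And>y. y \<in> X \<Longrightarrow> y \<in> set w \<Longrightarrow> ascent_into w y \<longleftrightarrow> descent_from w y"
  shows "swaps_bits X w w"
  using assms by (simp add: swaps_bits_def same_frame_def)

lemma swaps_bits_sym:
  assumes "distinct_nonzero w" "swaps_bits X w w'"
  shows "swaps_bits X w' w"
  using assms by (auto simp: swaps_bits_def same_frame_def)

lemma swaps_bits_trans:
  assumes "swaps_bits X w w'" "swaps_bits Y w' w''" "X \<inter> Y = {}"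
  shows "swaps_bits (X \<union> Y) w w''"
  using assms by (auto simp: swaps_bits_def same_frame_def)

lemma swaps_bits_letter_classes:
  assumes "swaps_bits X w w'"
  shows "peak_letters w' = peak_letters w" "double_letters w' = double_letters w"
    and "double_descent_letters w' = {y \<in> double_letters w. y \<in> X \<longleftrightarrow> y \<notin> double_descent_letters w}"
  using assms
  by (auto simp: swaps_bits_def same_frame_def peak_letters_def double_letters_def
      double_descent_letters_def split: if_splits)

lemma beyond_block_orientation:
  assumes "distinct_nonzero (A @ x # B @ C)" "beyond_block x A B C"
  shows "(x < 0 \<and> x < last (0 # A) \<and> hd B < x \<and> last B < x \<and> x < hd (C @ [0])) \<or>
         (0 < x \<and> last (0 # A) < x \<and> x < hd B \<and> x < last B \<and> hd (C @ [0]) < x)"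
proof -
  have "last (0 # A) \<noteq> x" "hd (C @ [0]) \<noteq> x"
    using assms(1) by (auto simp: distinct_nonzero_def hd_append split: if_splits)
  then show ?thesis
    using assms(2) by (auto simp: beyond_block_def beyond_def)
qed

lemma move_across_block_other_bits:
  assumes w: "w = A @ x # B @ C" and w': "w' = A @ B @ x # C"
    and dn: "distinct_nonzero w" and blk: "beyond_block x A B C"
    and y: "y \<in> set w" "y \<noteq> x"
  shows "(ascent_into w' y \<longleftrightarrow> ascent_into w y) \<and> (descent_from w' y \<longleftrightarrow> descent_from w y)"
    (is ?same)
proof -
  have dist: "distinct (A @ x # B @ C)" and "y \<noteq> 0" "B \<noteq> []"
    using dn w y blk by (auto simp: distinct_nonzero_def beyond_block_def)
  note ori = beyond_block_orientation[OF dn[unfolded w] blk]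
  have "y \<in> set A \<or> y \<in> set B \<or> y \<in> set C"
    using y w by auto
  moreover have ?same if "y \<in> set A"
  proof -
    obtain U V where A: "A = U @ y # V"
      using \<open>y \<in> set A\<close> by (meson split_list)
    have u: "y \<notin> set U"
      using dist A by auto
    have ws: "w = U @ y # (V @ x # B @ C)" "w' = U @ y # (V @ B @ x # C)"
      using w w' A by auto
    show ?same
      unfolding ascent_into_def descent_from_def ws nbr_pad_append[OF u \<open>y \<noteq> 0\<close>]
      using ori \<open>B \<noteq> []\<close> A by (cases V) (auto simp: hd_append)
  qed
  moreover have ?same if "y \<in> set B"
  proof -
    obtain U V where B: "B = U @ y # V"
      using \<open>y \<in> set B\<close> by (meson split_list)
    have u: "y \<notin> set (A @ x # U)" "y \<notin> set (A @ U)"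
      using dist B y by auto
    have ws: "w = (A @ x # U) @ y # (V @ C)" "w' = (A @ U) @ y # (V @ x # C)"
      using w w' B by auto
    show ?same
      unfolding ascent_into_def descent_from_def ws
        nbr_pad_append[OF u(1) \<open>y \<noteq> 0\<close>] nbr_pad_append[OF u(2) \<open>y \<noteq> 0\<close>]
      using ori B by (cases V; cases U) (auto simp: hd_append last_append)
  qed
  moreover have ?same if "y \<in> set C"
  proof -
    obtain U V where C: "C = U @ y # V"
      using \<open>y \<in> set C\<close> by (meson split_list)
    have u: "y \<notin> set (A @ x # B @ U)" "y \<notin> set (A @ B @ x # U)"
      using dist C y by auto
    have ws: "w = (A @ x # B @ U) @ y # V" "w' = (A @ B @ x # U) @ y # V"
      using w w' C by auto
    show ?same
      unfolding ascent_into_def descent_from_def ws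
        nbr_pad_append[OF u(1) \<open>y \<noteq> 0\<close>] nbr_pad_append[OF u(2) \<open>y \<noteq> 0\<close>]
      using ori \<open>B \<noteq> []\<close> C by (cases U) (auto simp: hd_append last_append)
  qed
  ultimately show ?same
    by blast
qed

lemma move_across_block:
  assumes w: "w = A @ x # B @ C" and w': "w' = A @ B @ x # C"
    and dn: "distinct_nonzero w" and blk: "beyond_block x A B C"
  shows "swaps_bits {x} w w'"
proof -
  note ori = beyond_block_orientation[OF dn[unfolded w] blk]
  have "B \<noteq> []"
    using blk by (simp add: beyond_block_def)
  have "same_frame w w'"
    using dn ori \<open>B \<noteq> []\<close> unfolding same_frame_def distinct_nonzero_def w w'
    by (auto simp: hd_append last_append)
  moreover have "x \<noteq> 0" "x \<notin> set A" "x \<notin> set (A @ B)"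
    using dn w by (auto simp: distinct_nonzero_def)
  then have "(ascent_into w' x \<longleftrightarrow> descent_from w x) \<and> (descent_from w' x \<longleftrightarrow> ascent_into w x)"
    unfolding ascent_into_def descent_from_def w w' append_assoc[symmetric, of A B "x # C"]
      nbr_pad_append[OF \<open>x \<notin> set A\<close> \<open>x \<noteq> 0\<close>] nbr_pad_append[OF \<open>x \<notin> set (A @ B)\<close> \<open>x \<noteq> 0\<close>]
    using ori \<open>B \<noteq> []\<close> by (auto simp: hd_append last_append)
  ultimately show ?thesis
    using move_across_block_other_bits[OF w w' dn blk] by (auto simp: swaps_bits_def)
qed

section \<open>The maps psi_x\<close>

lemma Least_pad_nth_eq_Suc:
  assumes "distinct_nonzero w" "j < length w"
  shows "(LEAST k. 0 < k \<and> pad w ! k = w ! j) = Suc j"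
proof (rule Least_equality)
  show "0 < Suc j \<and> pad w ! Suc j = w ! j"
    using assms(2) by simp
  show "Suc j \<le> k" if "0 < k \<and> pad w ! k = w ! j" for k
    using that assms(2) pad_nth_eq_nth_iff[OF assms, of k] by (cases "k < length w + 2") auto
qed

lemma pad_nth_ne_letter:
  assumes "distinct_nonzero w" "j < length w" "m < length w + 2" "m \<noteq> Suc j"
  shows "pad w ! m \<noteq> w ! j" and "beyond (w ! j) (pad w ! m) \<longleftrightarrow> (pad w ! m < w ! j \<longleftrightarrow> w ! j < 0)"
proof -
  show ne: "pad w ! m \<noteq> w ! j"
    using pad_nth_eq_nth_iff[OF assms(1-3)] assms(4) by simp
  have "w ! j \<noteq> 0"
    using assms(1,2) nth_mem by (metis distinct_nonzero_def)
  with ne show "beyond (w ! j) (pad w ! m) \<longleftrightarrow> (pad w ! m < w ! j \<longleftrightarrow> w ! j < 0)"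
    by (auto simp: beyond_def)
qed

lemma psi_eq_move_right:
  assumes dn: "distinct_nonzero w" and j: "j < length w" "w ! j = x"
    and "\<not> beyond x (pad w ! j)" "beyond x (pad w ! Suc (Suc j))"
  shows "psi x w = strip (move_right (pad w) (Suc j)
    (LEAST i. Suc j < i \<and> i < Suc (length w) \<and> beyond x (pad w ! i) \<and> \<not> beyond x (pad w ! Suc i)))"
proof -
  note nb = pad_nth_ne_letter[OF dn j(1), unfolded j(2)]
  have "x \<in> set w"
    using j nth_mem by blast
  then have "x \<noteq> 0"
    using dn by (auto simp: distinct_nonzero_def)
  have nbrs: "if x < 0 then x < pad w ! j \<and> pad w ! Suc (Suc j) < x
              else pad w ! j < x \<and> x < pad w ! Suc (Suc j)"
    using assms(4,5) nb[of j] nb[of "Suc (Suc j)"] j(1) by auto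
  have "(Suc j < i \<and> i < Suc (length w) \<and> beyond x (pad w ! i) \<and> \<not> beyond x (pad w ! Suc i)) \<longleftrightarrow>
        Suc j < i \<and> i < Suc (length w) \<and>
        (if x < 0 then pad w ! i < x \<and> x < pad w ! Suc i else x < pad w ! i \<and> pad w ! Suc i < x)" for i
    using nb[of i] nb[of "Suc i"] \<open>x \<noteq> 0\<close> by auto
  then show ?thesis
    using \<open>x \<in> set w\<close> nbrs
    by (cases "x < 0") (simp_all add: psi_def Let_def Least_pad_nth_eq_Suc[OF dn j(1), unfolded j(2)])
qed

lemma psi_eq_move_left:
  assumes dn: "distinct_nonzero w" and j: "j < length w" "w ! j = x"
    and "beyond x (pad w ! j)" "\<not> beyond x (pad w ! Suc (Suc j))"
  shows "psi x w = strip (move_left (pad w) (Suc j)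
    (GREATEST i. i < j \<and> \<not> beyond x (pad w ! i) \<and> beyond x (pad w ! Suc i)))"
proof -
  note nb = pad_nth_ne_letter[OF dn j(1), unfolded j(2)]
  have "x \<in> set w"
    using j nth_mem by blast
  then have "x \<noteq> 0"
    using dn by (auto simp: distinct_nonzero_def)
  have nbrs: "if x < 0 then pad w ! j < x \<and> x < pad w ! Suc (Suc j)
              else x < pad w ! j \<and> pad w ! Suc (Suc j) < x"
    using assms(4,5) nb[of j] nb[of "Suc (Suc j)"] j(1) by auto
  have "(i < j \<and> \<not> beyond x (pad w ! i) \<and> beyond x (pad w ! Suc i)) \<longleftrightarrow>
        i < j \<and> (if x < 0 then x < pad w ! i \<and> pad w ! Suc i < x else pad w ! i < x \<and> x < pad w ! Suc i)" for i
    using nb[of i] nb[of "Suc i"] \<open>x \<noteq> 0\<close> j(1) by auto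
  then show ?thesis
    using \<open>x \<in> set w\<close> nbrs
    by (cases "x < 0") (simp_all add: psi_def Let_def Least_pad_nth_eq_Suc[OF dn j(1), unfolded j(2)])
qed

lemma move_right_pad:
  assumes "j < i" "i \<le> length w"
  shows "move_right (pad w) (Suc j) i = pad (take j w @ take (i - Suc j) (drop (Suc j) w) @ w ! j # drop i w)"
  using assms by (simp add: move_right_def pad_def nth_append)

lemma move_left_pad:
  assumes "i < j" "j < length w"
  shows "move_left (pad w) (Suc j) i = pad (take i w @ w ! j # take (j - i) (drop i w) @ drop (Suc j) w)"
  using assms by (simp add: move_left_def pad_def nth_append)

lemma take_drop_pad_nth:
  assumes "a < b" "b \<le> length w"
  shows "take (b - a) (drop a w) \<noteq> []"
    and "hd (take (b - a) (drop a w)) = pad w ! Suc a"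
    and "last (take (b - a) (drop a w)) = pad w ! b"
  using assms by (auto simp: pad_def nth_append hd_drop_conv_nth last_conv_nth)

lemma psi_moves_right:
  assumes dn: "distinct_nonzero w" and j: "j < length w" "w ! j = x"
    and left: "\<not> beyond x (pad w ! j)" and right: "beyond x (pad w ! Suc (Suc j))"
  shows "\<exists>B C. beyond_block x (take j w) B C \<and> w = take j w @ x # B @ C \<and> psi x w = take j w @ B @ x # C"
proof -
  let ?Q = "\<lambda>i. Suc j < i \<and> i < Suc (length w) \<and> beyond x (pad w ! i) \<and> \<not> beyond x (pad w ! Suc i)"
  have idx: "Suc (Suc j) + (length w - Suc j) = Suc (length w)"
    using j(1) by simp
  have "\<not> beyond x (pad w ! (Suc (Suc j) + (length w - Suc j)))"
    unfolding idx by (simp add: beyond_def)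
  from ex_least_nat_less[where P = "\<lambda>k. \<not> beyond x (pad w ! (Suc (Suc j) + k))", OF this] right
  obtain k where
    "k < length w - Suc j" "beyond x (pad w ! (Suc (Suc j) + k))" "\<not> beyond x (pad w ! (Suc (Suc j) + Suc k))"
    by auto
  then have "?Q (Suc (Suc j) + k)"
    by auto
  define i where "i = (LEAST i. ?Q i)"
  have Q: "?Q i"
    unfolding i_def by (rule LeastI) fact
  define B where "B = take (i - Suc j) (drop (Suc j) w)"
  define C where "C = drop i w"
  have i: "Suc j < i" "i \<le> length w"
    using Q by simp_all
  have w: "w = take j w @ x # B @ C"
    unfolding B_def C_def using i j
    by (metis append_take_drop_id drop_drop id_take_nth_drop le_add_diff_inverse2 less_imp_le_nat)
  have "psi x w = take j w @ B @ x # C"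
    using psi_eq_move_right[OF assms, folded i_def] move_right_pad[of j i w] i j
    by (simp add: B_def C_def)
  moreover have "beyond_block x (take j w) B C"
    unfolding beyond_block_def B_def C_def
    using Q i left right take_drop_pad_nth[OF i] last_0_take_eq_pad_nth[of j w] hd_drop_0_eq_pad_nth[of i w]
    by auto
  ultimately show ?thesis
    using w by blast
qed

lemma psi_moves_left:
  assumes dn: "distinct_nonzero w" and j: "j < length w" "w ! j = x"
    and left: "beyond x (pad w ! j)" and right: "\<not> beyond x (pad w ! Suc (Suc j))"
  shows "\<exists>A B. beyond_block x A B (drop (Suc j) w) \<and>
    w = A @ B @ x # drop (Suc j) w \<and> psi x w = A @ x # B @ drop (Suc j) w"
proof -
  let ?Q = "\<lambda>i. i < j \<and> \<not> beyond x (pad w ! i) \<and> beyond x (pad w ! Suc i)"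
  have "\<not> beyond x (pad w ! (j - j))"
    by (simp add: beyond_def)
  from ex_least_nat_less[where P = "\<lambda>k. \<not> beyond x (pad w ! (j - k))", OF this] left
  obtain k where "k < j" "beyond x (pad w ! (j - k))" "\<not> beyond x (pad w ! (j - Suc k))"
    by auto
  then have "?Q (j - Suc k)"
    by (simp add: Suc_diff_Suc)
  define i where "i = (GREATEST i. ?Q i)"
  have Q: "?Q i"
    unfolding i_def by (rule GreatestI_ex_nat[where b = j]) (use \<open>?Q (j - Suc k)\<close> in auto)
  define A where "A = take i w"
  define B where "B = take (j - i) (drop i w)"
  have i: "i < j"
    using Q by simp
  have w: "w = A @ B @ x # drop (Suc j) w"
    unfolding A_def B_def using i j
    by (metis add_diff_inverse_nat append.assoc id_take_nth_drop not_less_iff_gr_or_eq order.asym take_add)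
  have "psi x w = A @ x # B @ drop (Suc j) w"
    using psi_eq_move_left[OF assms, folded i_def] move_left_pad[OF i j(1)] j
    by (simp add: A_def B_def)
  moreover have "beyond_block x A B (drop (Suc j) w)"
    unfolding beyond_block_def A_def B_def
    using Q i j left right take_drop_pad_nth[of i j w] last_0_take_eq_pad_nth[of i w]
      hd_drop_0_eq_pad_nth[of "Suc j" w]
    by auto
  ultimately show ?thesis
    using w by blast
qed

lemma ascent_into_eq_descent_from_iff:
  assumes "distinct_nonzero w" "j < length w" "w ! j = x"
  shows "(ascent_into w x \<longleftrightarrow> descent_from w x) \<longleftrightarrow>
    (beyond x (pad w ! j) \<longleftrightarrow> beyond x (pad w ! Suc (Suc j)))"
  using pad_nth_ne_letter[OF assms(1,2), of j] pad_nth_ne_letter[OF assms(1,2), of "Suc (Suc j)"] assms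
  by (auto simp: ascent_into_def descent_from_def nbr_pad_nth)

lemma psi_fixed:
  assumes "distinct_nonzero w" "ascent_into w x \<longleftrightarrow> descent_from w x"
  shows "psi x w = w"
proof (cases "x \<in> set w")
  case True
  then obtain j where j: "j < length w" "w ! j = x"
    by (meson in_set_conv_nth)
  show ?thesis
    using assms j pad_nth_ne_letter[OF assms(1) j(1), of j] pad_nth_ne_letter[OF assms(1) j(1), of "Suc (Suc j)"]
    by (auto simp: psi_def Let_def Least_pad_nth_eq_Suc ascent_into_def descent_from_def nbr_pad_nth)
qed (simp add: psi_def)

lemma psi_crosses_block:
  assumes dn: "distinct_nonzero w" and "x \<in> set w" "ascent_into w x \<noteq> descent_from w x"
  shows "\<exists>A B C. beyond_block x A B C \<and>
    (w = A @ x # B @ C \<and> psi x w = A @ B @ x # C \<or> w = A @ B @ x # C \<and> psi x w = A @ x # B @ C)"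
proof -
  obtain j where j: "j < length w" "w ! j = x"
    using assms(2) by (meson in_set_conv_nth)
  then have "beyond x (pad w ! j) \<noteq> beyond x (pad w ! Suc (Suc j))"
    using ascent_into_eq_descent_from_iff[OF dn j] assms(3) by blast
  then show ?thesis
    using psi_moves_left[OF dn j] psi_moves_right[OF dn j] by (cases "beyond x (pad w ! j)") blast+
qed

lemma psi_swaps_bits:
  assumes dn: "distinct_nonzero w"
  shows "swaps_bits {x} w (psi x w)"
proof (cases "x \<in> set w \<and> ascent_into w x \<noteq> descent_from w x")
  case False
  then have "psi x w = w"
    using psi_fixed[OF dn] by (auto simp: psi_def)
  then show ?thesis
    using False swaps_bits_refl[OF dn] by auto
next
  case True
  then obtain A B C where blk: "beyond_block x A B C" and dir:
    "w = A @ x # B @ C \<and> psi x w = A @ B @ x # C \<or> w = A @ B @ x # C \<and> psi x w = A @ x # B @ C"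
    using psi_crosses_block[OF dn] by blast
  from dir show ?thesis
  proof
    assume h: "w = A @ x # B @ C \<and> psi x w = A @ B @ x # C"
    show ?thesis
      using move_across_block[OF conjunct1[OF h] conjunct2[OF h] dn blk] .
  next
    assume h: "w = A @ B @ x # C \<and> psi x w = A @ x # B @ C"
    then have "distinct_nonzero (psi x w)"
      using dn by (auto simp: distinct_nonzero_def)
    then show ?thesis
      using swaps_bits_sym move_across_block[OF conjunct2[OF h] conjunct1[OF h] _ blk] by blast
  qed
qed

lemma fold_psi_swaps_bits:
  "distinct_nonzero w \<Longrightarrow> distinct xs \<Longrightarrow> swaps_bits (set xs) w (fold psi xs w)"
proof (induction xs arbitrary: w)
  case Nil
  then show ?case
    by (auto intro: swaps_bits_refl)
next
  case (Cons x xs)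
  have "swaps_bits {x} w (psi x w)"
    using psi_swaps_bits[OF Cons.prems(1)] .
  moreover from this have "distinct_nonzero (psi x w)"
    by (simp add: swaps_bits_def same_frame_def)
  ultimately show ?case
    using swaps_bits_trans Cons.IH Cons.prems(2) by fastforce
qed

section \<open>Counting descents and peaks\<close>

lemma card_letters_conv_positions:
  "distinct w \<Longrightarrow> card {y \<in> set w. Q y} = card {i. i < length w \<and> Q (w ! i)}"
  by (metis distinct_card distinct_filter length_filter_conv_card set_filter)

lemma card_descent_from:
  assumes dn: "distinct_nonzero w" and "w \<noteq> []"
  shows "card {y \<in> set w. descent_from w y} = des w + (if 0 < last w then 1 else 0)"
proof -
  let ?n = "length w"
  let ?Ds = "{i. i + 1 < ?n \<and> w ! (i + 1) < w ! i}"
  have "finite ?Ds" "?n - 1 \<notin> ?Ds"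
    by (auto intro: finite_subset[of _ "{..<?n}"])
  moreover have "i < ?n \<and> descent_from w (w ! i) \<longleftrightarrow> i \<in> ?Ds \<union> (if 0 < w ! (?n - 1) then {?n - 1} else {})" for i
  proof (cases "i + 1 = ?n")
    case True
    then have "i = ?n - 1"
      by simp
    then show ?thesis
      using descent_from_nth[OF dn, of i] True by auto
  qed (use descent_from_nth[OF dn, of i] \<open>w \<noteq> []\<close> in auto)
  then have "{i. i < ?n \<and> descent_from w (w ! i)} = ?Ds \<union> (if 0 < w ! (?n - 1) then {?n - 1} else {})"
    by blast
  ultimately show ?thesis
    using card_letters_conv_positions[of w] dn \<open>w \<noteq> []\<close>
    by (simp add: des_def last_conv_nth distinct_nonzero_def)
qed

lemma card_ascent_into:
  assumes dn: "distinct_nonzero w" and "w \<noteq> []"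
  shows "card {y \<in> set w. ascent_into w y} + des w + 1 = length w + (if 0 < hd w then 1 else 0)"
proof -
  let ?n = "length w"
  let ?As = "{i. i + 1 < ?n \<and> w ! i < w ! (i + 1)}"
  let ?Ds = "{i. i + 1 < ?n \<and> w ! (i + 1) < w ! i}"
  have "w ! i \<noteq> w ! (i + 1)" if "i + 1 < ?n" for i
    using dn that by (simp add: distinct_nonzero_def nth_eq_iff_index_eq)
  then have "?As \<union> ?Ds = {..< ?n - 1}" "?As \<inter> ?Ds = {}"
    by (auto simp: less_diff_conv) (meson linorder_neqE)
  moreover have fin: "finite ?As" "finite ?Ds"
    by (auto intro: finite_subset[of _ "{..<?n}"])
  ultimately have "card ?As + des w = ?n - 1"
    unfolding des_def using card_Un_disjoint[OF fin] by simp
  moreover have "i < ?n \<and> ascent_into w (w ! i) \<longleftrightarrow> i \<in> (if 0 < w ! 0 then {0} else {}) \<union> Suc ` ?As" for i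
    using ascent_into_nth[OF dn, of i] \<open>w \<noteq> []\<close> by (cases i) auto
  then have pos: "{i. i < ?n \<and> ascent_into w (w ! i)} = (if 0 < w ! 0 then {0} else {}) \<union> Suc ` ?As"
    by blast
  have "card {i. i < ?n \<and> ascent_into w (w ! i)} = (if 0 < w ! 0 then 1 else 0) + card ?As"
    unfolding pos using fin(1) by (subst card_Un_disjoint) (auto simp: card_image)
  ultimately show ?thesis
    using card_letters_conv_positions[of w "ascent_into w"] dn \<open>w \<noteq> []\<close>
    by (auto simp: distinct_nonzero_def hd_conv_nth)
qed

lemma peak_eq_card_peak_letters:
  assumes dn: "distinct_nonzero w" and "w \<noteq> []" "hd w < 0" "last w < 0"
  shows "peak w = card (peak_letters w)"
proof -
  have ends: "w ! 0 < 0" "w ! (length w - 1) < 0"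
    using assms(2-4) by (simp_all add: hd_conv_nth last_conv_nth)
  have "i < length w \<and> ascent_into w (w ! i) \<and> descent_from w (w ! i) \<longleftrightarrow>
        0 < i \<and> i + 1 < length w \<and> w ! (i - 1) < w ! i \<and> w ! (i + 1) < w ! i" for i
  proof (cases "i = 0 \<or> i + 1 = length w")
    case True
    then have "i = 0 \<or> i = length w - 1"
      by auto
    then show ?thesis
      using ascent_into_nth[OF dn, of i] descent_from_nth[OF dn, of i] ends True by auto
  qed (use ascent_into_nth[OF dn, of i] descent_from_nth[OF dn, of i] in auto)
  then show ?thesis
    using card_letters_conv_positions[of w "\<lambda>y. ascent_into w y \<and> descent_from w y"] dn
    by (simp add: peak_def peak_letters_def distinct_nonzero_def)
qed

lemma no_dd_iff_double_descent_letters_empty: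
  assumes dn: "distinct_nonzero w"
  shows "no_dd w \<longleftrightarrow> double_descent_letters w = {}"
proof -
  have "(\<exists>k. 0 < k \<and> k + 1 < length (pad w) \<and> pad w ! k < pad w ! (k - 1) \<and> pad w ! (k + 1) < pad w ! k)
    \<longleftrightarrow> (\<exists>i < length w. w ! i < pad w ! i \<and> pad w ! Suc (Suc i) < w ! i)" (is "?k \<longleftrightarrow> ?i")
  proof
    assume ?k
    then obtain i where "i < length w" "pad w ! Suc i < pad w ! i" "pad w ! Suc (Suc i) < pad w ! Suc i"
      by (auto simp: gr0_conv_Suc)
    then show ?i
      by auto
  next
    assume ?i
    then obtain i where "i < length w" "w ! i < pad w ! i" "pad w ! Suc (Suc i) < w ! i"
      by blast
    then have "0 < Suc i \<and> Suc i + 1 < length (pad w) \<and>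
        pad w ! Suc i < pad w ! (Suc i - 1) \<and> pad w ! (Suc i + 1) < pad w ! Suc i"
      by simp
    then show ?k
      by blast
  qed
  then have "no_dd w \<longleftrightarrow> (\<forall>i < length w. \<not> (w ! i < pad w ! i \<and> pad w ! Suc (Suc i) < w ! i))"
    unfolding no_dd_def by blast
  also have "\<dots> \<longleftrightarrow> (\<forall>i < length w. w ! i \<notin> double_descent_letters w)"
  proof -
    have "w ! i < pad w ! i \<longleftrightarrow> \<not> ascent_into w (w ! i)" if "i < length w" for i
      using that pad_nth_ne_letter(1)[OF dn that, of i] by (auto simp: ascent_into_def nbr_pad_nth[OF dn])
    then show ?thesis
      by (auto simp: double_descent_letters_def descent_from_def nbr_pad_nth[OF dn])
  qed
  also have "\<dots> \<longleftrightarrow> (\<forall>y \<in> set w. y \<notin> double_descent_letters w)"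
    by (simp add: all_set_conv_all_nth)
  finally show ?thesis
    by (auto simp: double_descent_letters_def)
qed

lemma des_eq_card_peak_double_descent_letters:
  assumes "distinct_nonzero w" "w \<noteq> []"
  shows "des w + (if 0 < last w then 1 else 0) = card (peak_letters w) + card (double_descent_letters w)"
proof -
  have "{y \<in> set w. descent_from w y} = peak_letters w \<union> double_descent_letters w"
    "peak_letters w \<inter> double_descent_letters w = {}"
    by (auto simp: peak_letters_def double_descent_letters_def)
  moreover have "finite (peak_letters w)" "finite (double_descent_letters w)"
    by (simp_all add: peak_letters_def double_descent_letters_def)
  ultimately show ?thesis
    using card_descent_from[OF assms] by (simp add: card_Un_disjoint)
qed

lemma card_ascent_into_no_double_descent:
  assumes "double_descent_letters w = {}"
  shows "card {y \<in> set w. ascent_into w y} = card (peak_letters w) + card (double_letters w)"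
proof -
  have "{y \<in> set w. ascent_into w y} = peak_letters w \<union> double_letters w"
    "peak_letters w \<inter> double_letters w = {}"
    using assms by (auto simp: peak_letters_def double_letters_def double_descent_letters_def)
  moreover have "finite (peak_letters w)" "finite (double_letters w)"
    by (simp_all add: peak_letters_def double_letters_def)
  ultimately show ?thesis
    by (simp add: card_Un_disjoint)
qed

section \<open>Orbits\<close>

lemma fold_psi_sorted_swaps_bits:
  "distinct_nonzero w \<Longrightarrow> finite X \<Longrightarrow> swaps_bits X w (fold psi (sorted_list_of_set X) w)"
  using fold_psi_swaps_bits[of w "sorted_list_of_set X"] by simp

lemma fold_psi_filter_double_letters:
  assumes "distinct_nonzero w"
  shows "fold psi xs w = fold psi (filter (\<lambda>x. x \<in> double_letters w) xs) w"
  using assms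
proof (induction xs arbitrary: w)
  case (Cons x xs)
  note step = psi_swaps_bits[OF Cons.prems, of x]
  have "distinct_nonzero (psi x w)"
    using step by (simp add: swaps_bits_def same_frame_def)
  moreover have "double_letters (psi x w) = double_letters w"
    using swaps_bits_letter_classes(2)[OF step] .
  moreover have "psi x w = w" if "x \<notin> double_letters w"
    using that psi_fixed[OF Cons.prems] by (auto simp: double_letters_def psi_def)
  ultimately show ?case
    using Cons.IH Cons.prems by auto
qed simp

lemma fold_psi_Int_double_letters:
  assumes "distinct_nonzero w" "finite X"
  shows "fold psi (sorted_list_of_set X) w = fold psi (sorted_list_of_set (X \<inter> double_letters w)) w"
proof -
  have "filter (\<lambda>x. x \<in> double_letters w) (sorted_list_of_set X) = sorted_list_of_set (X \<inter> double_letters w)"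
    by (rule sorted_distinct_set_unique) (use assms(2) in \<open>auto simp: sorted_wrt_filter\<close>)
  then show ?thesis
    using fold_psi_filter_double_letters[OF assms(1)] by metis
qed

lemma Orb_eq_image_Pow:
  assumes "set \<pi> = \<omega> ` P"
  shows "Orb P \<omega> \<pi> = (\<lambda>X. fold psi (sorted_list_of_set X) \<pi>) ` Pow (set \<pi>)"
proof -
  have "Pow (set \<pi>) = image \<omega> ` Pow P"
    unfolding assms by (simp add: image_Pow_surj)
  then show ?thesis
    by (auto simp: Orb_def psiS_def)
qed

lemma Orb_letter_classes:
  assumes "distinct_nonzero \<pi>" "set \<pi> = \<omega> ` P" "\<sigma> \<in> Orb P \<omega> \<pi>"
  shows "same_frame \<pi> \<sigma>" "peak_letters \<sigma> = peak_letters \<pi>" "double_letters \<sigma> = double_letters \<pi>"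
proof -
  obtain X where X: "X \<subseteq> set \<pi>" "\<sigma> = fold psi (sorted_list_of_set X) \<pi>"
    using assms(3) unfolding Orb_eq_image_Pow[OF assms(2)] by blast
  then have "swaps_bits X \<pi> \<sigma>"
    using fold_psi_sorted_swaps_bits[OF assms(1)] finite_subset by blast
  then show "same_frame \<pi> \<sigma>" "peak_letters \<sigma> = peak_letters \<pi>" "double_letters \<sigma> = double_letters \<pi>"
    using swaps_bits_letter_classes by (simp_all add: swaps_bits_def)
qed

lemma bij_betw_double_descent_letters_Orb:
  assumes dn: "distinct_nonzero \<pi>" and "set \<pi> = \<omega> ` P"
  shows "bij_betw double_descent_letters (Orb P \<omega> \<pi>) (Pow (double_letters \<pi>))"
proof -
  define F where "F X = fold psi (sorted_list_of_set X) \<pi>" for X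
  let ?D = "double_letters \<pi>" and ?Dd = "double_descent_letters \<pi>"
  have DdF: "double_descent_letters (F X) = {y \<in> ?D. y \<in> X \<longleftrightarrow> y \<notin> ?Dd}" if "X \<subseteq> set \<pi>" for X
    unfolding F_def using swaps_bits_letter_classes(3) fold_psi_sorted_swaps_bits[OF dn] finite_subset[OF that]
    by blast
  have "?Dd \<subseteq> ?D" "?D \<subseteq> set \<pi>"
    by (auto simp: double_letters_def double_descent_letters_def)
  have "inj_on double_descent_letters (F ` Pow (set \<pi>))"
  proof (rule inj_onI)
    fix \<sigma>1 \<sigma>2 assume "\<sigma>1 \<in> F ` Pow (set \<pi>)" "\<sigma>2 \<in> F ` Pow (set \<pi>)"
      and eq: "double_descent_letters \<sigma>1 = double_descent_letters \<sigma>2"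
    then obtain X1 X2 where X: "X1 \<subseteq> set \<pi>" "X2 \<subseteq> set \<pi>" "\<sigma>1 = F X1" "\<sigma>2 = F X2"
      by blast
    then have "X1 \<inter> ?D = X2 \<inter> ?D"
      using DdF eq by auto
    then show "\<sigma>1 = \<sigma>2"
      using X fold_psi_Int_double_letters[OF dn] finite_subset unfolding F_def by (metis List.finite_set)
  qed
  moreover have "double_descent_letters ` F ` Pow (set \<pi>) = Pow ?D"
  proof
    show "double_descent_letters ` F ` Pow (set \<pi>) \<subseteq> Pow ?D"
      using DdF by auto
    show "Pow ?D \<subseteq> double_descent_letters ` F ` Pow (set \<pi>)"
    proof
      fix T assume "T \<in> Pow ?D"
      define X where "X = {y \<in> ?D. y \<in> T \<longleftrightarrow> y \<notin> ?Dd}"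
      have "X \<subseteq> set \<pi>"
        using \<open>?D \<subseteq> set \<pi>\<close> by (auto simp: X_def)
      moreover have "double_descent_letters (F X) = T"
        using DdF[OF \<open>X \<subseteq> set \<pi>\<close>] \<open>T \<in> Pow ?D\<close> by (auto simp: X_def)
      ultimately show "T \<in> double_descent_letters ` F ` Pow (set \<pi>)"
        by blast
    qed
  qed
  ultimately show ?thesis
    unfolding bij_betw_def Orb_eq_image_Pow[OF assms(2)] F_def by simp
qed

lemma no_dd_Orb_iff:
  assumes "distinct_nonzero \<pi>" "set \<pi> = \<omega> ` P" "\<sigma> \<in> Orb P \<omega> \<pi>"
  shows "no_dd \<sigma> \<longleftrightarrow> double_descent_letters \<sigma> = {}"
  using Orb_letter_classes(1)[OF assms]
  by (simp add: same_frame_def no_dd_iff_double_descent_letters_empty)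

lemma exists_no_dd_Orb:
  assumes "distinct_nonzero \<pi>" "set \<pi> = \<omega> ` P"
  shows "\<exists>\<pi>h\<in>Orb P \<omega> \<pi>. no_dd \<pi>h"
proof -
  have "{} \<in> double_descent_letters ` Orb P \<omega> \<pi>"
    using bij_betw_double_descent_letters_Orb[OF assms] by (simp add: bij_betw_def)
  then show ?thesis
    using no_dd_Orb_iff[OF assms] by blast
qed

lemma des_Orb:
  assumes "distinct_nonzero \<pi>" "\<pi> \<noteq> []" "set \<pi> = \<omega> ` P" "\<sigma> \<in> Orb P \<omega> \<pi>"
  shows "des \<sigma> + (if 0 < last \<pi> then 1 else 0) = card (peak_letters \<pi>) + card (double_descent_letters \<sigma>)"
proof -
  note cl = Orb_letter_classes[OF assms(1,3,4)]
  then have "distinct_nonzero \<sigma>" "\<sigma> \<noteq> []" "0 < last \<sigma> \<longleftrightarrow> 0 < last \<pi>"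
    using assms(2) by (auto simp: same_frame_def)
  then show ?thesis
    using des_eq_card_peak_double_descent_letters[of \<sigma>] cl(2) by simp
qed

lemma sum_power_card_Pow:
  fixes t :: "'b :: comm_semiring_1"
  assumes "finite A"
  shows "(\<Sum>T\<in>Pow A. t ^ card T) = (1 + t) ^ card A"
  using prod_add[OF assms, of "\<lambda>_. t" "\<lambda>_. 1"] by (simp add: add.commute)

lemma des_generating_function_Orb:
  fixes t :: "'b :: comm_semiring_1"
  assumes "distinct_nonzero \<pi>" "\<pi> \<noteq> []" "set \<pi> = \<omega> ` P"
    and "\<pi>h \<in> Orb P \<omega> \<pi>" "double_descent_letters \<pi>h = {}"
  shows "(\<Sum>\<sigma>\<in>Orb P \<omega> \<pi>. t ^ des \<sigma>) = t ^ des \<pi>h * (1 + t) ^ card (double_letters \<pi>)"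
proof -
  have "des \<sigma> = des \<pi>h + card (double_descent_letters \<sigma>)" if "\<sigma> \<in> Orb P \<omega> \<pi>" for \<sigma>
    using des_Orb[OF assms(1-3) that] des_Orb[OF assms(1-4)] assms(5) by simp
  then have "(\<Sum>\<sigma>\<in>Orb P \<omega> \<pi>. t ^ des \<sigma>) = (\<Sum>\<sigma>\<in>Orb P \<omega> \<pi>. t ^ des \<pi>h * t ^ card (double_descent_letters \<sigma>))"
    by (intro sum.cong) (simp_all add: power_add)
  also have "\<dots> = t ^ des \<pi>h * (\<Sum>\<sigma>\<in>Orb P \<omega> \<pi>. t ^ card (double_descent_letters \<sigma>))"
    by (rule sum_distrib_left[symmetric])
  also have "(\<Sum>\<sigma>\<in>Orb P \<omega> \<pi>. t ^ card (double_descent_letters \<sigma>)) = (\<Sum>T\<in>Pow (double_letters \<pi>). t ^ card T)"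
    by (rule sum.reindex_bij_betw[OF bij_betw_double_descent_letters_Orb[OF assms(1,3)]])
  also have "\<dots> = (1 + t) ^ card (double_letters \<pi>)"
    by (rule sum_power_card_Pow) (simp add: double_letters_def)
  finally show ?thesis .
qed

lemma card_double_letters_Orb:
  assumes "distinct_nonzero \<pi>" "\<pi> \<noteq> []" "set \<pi> = \<omega> ` P" "hd \<pi> < 0"
    and "\<pi>h \<in> Orb P \<omega> \<pi>" "double_descent_letters \<pi>h = {}"
  shows "card (double_letters \<pi>) + 2 * des \<pi>h + 1 + (if 0 < last \<pi> then 1 else 0) = length \<pi>"
proof -
  note cl = Orb_letter_classes[OF assms(1,3,5)]
  then have "distinct_nonzero \<pi>h" "\<pi>h \<noteq> []" "\<not> 0 < hd \<pi>h" "length \<pi>h = length \<pi>"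
    using assms(1,2,4) by (auto simp: same_frame_def distinct_nonzero_def distinct_card[symmetric])
  then show ?thesis
    using card_ascent_into[of \<pi>h] card_ascent_into_no_double_descent[OF assms(6)] cl(2,3)
      des_Orb[OF assms(1-3,5)] assms(6) by simp
qed

lemma peak_Orb:
  assumes "distinct_nonzero \<pi>" "\<pi> \<noteq> []" "set \<pi> = \<omega> ` P" "hd \<pi> < 0" "last \<pi> < 0"
    and "\<sigma> \<in> Orb P \<omega> \<pi>"
  shows "peak \<sigma> = card (peak_letters \<pi>)"
proof -
  note cl = Orb_letter_classes[OF assms(1,3,6)]
  then have "distinct_nonzero \<sigma>" "\<sigma> \<noteq> []" "hd \<sigma> < 0" "\<not> 0 < last \<sigma>"
    using assms(2,4,5) by (auto simp: same_frame_def)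
  moreover have "last \<sigma> \<noteq> 0"
    using calculation(1,2) last_in_set by (fastforce simp: distinct_nonzero_def)
  ultimately show ?thesis
    using peak_eq_card_peak_letters[of \<sigma>] cl(2) by simp
qed

section \<open>Linear extensions of canonically labeled posets\<close>

lemma rho_eqI:
  assumes "sat_chain_from_min P lt c" "last c = y"
    and "\<And>c. sat_chain_from_min P lt c \<Longrightarrow> last c = y \<Longrightarrow> eps_sum \<omega> c = v"
  shows "rho P lt \<omega> y = v"
  unfolding rho_def by (rule the_equality) (use assms in blast)+

lemma rho_minimal:
  assumes "minimal_in P lt y"
  shows "rho P lt \<omega> y = 0"
proof (rule rho_eqI)
  show "sat_chain_from_min P lt [y]" "last [y] = y"
    using assms by (simp_all add: sat_chain_from_min_def)
  fix c assume c: "sat_chain_from_min P lt c" "last c = y"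
  have "length c = 1"
  proof (rule ccontr)
    assume "length c \<noteq> 1"
    moreover have "c \<noteq> []"
      using c(1) by (simp add: sat_chain_from_min_def)
    ultimately have "2 \<le> length c"
      by (metis One_nat_def Suc_1 Suc_leI le_neq_implies_less length_greater_0_conv)
    then have "length c - 2 + 1 < length c" "c ! (length c - 2 + 1) = y"
      using c(2) \<open>c \<noteq> []\<close> by (simp_all add: last_conv_nth Suc_diff_Suc numeral_2_eq_2)
    then have "covers P lt (c ! (length c - 2)) y"
      using c(1) unfolding sat_chain_from_min_def by metis
    then show False
      using assms by (auto simp: covers_def minimal_in_def)
  qed
  then show "eps_sum \<omega> c = 0"
    by (simp add: eps_sum_def)
qed

lemma sat_chain_snoc:
  assumes "sat_chain_from_min P lt c" "covers P lt (last c) y"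
  shows "sat_chain_from_min P lt (c @ [y])"
  unfolding sat_chain_from_min_def
proof (intro conjI allI impI)
  have "c \<noteq> []"
    using assms(1) by (simp add: sat_chain_from_min_def)
  then show "c @ [y] \<noteq> []" "minimal_in P lt (hd (c @ [y]))"
    using assms(1) by (simp_all add: sat_chain_from_min_def)
  fix i assume "i + 1 < length (c @ [y])"
  then consider "i + 1 < length c" | "i = length c - 1"
    by fastforce
  then show "covers P lt ((c @ [y]) ! i) ((c @ [y]) ! (i + 1))"
  proof cases
    case 1
    then show ?thesis
      using assms(1) by (simp add: sat_chain_from_min_def nth_append)
  next
    case 2
    then show ?thesis
      using assms(2) \<open>c \<noteq> []\<close> by (simp add: nth_append last_conv_nth)
  qed
qed

lemma exists_cover_below:
  assumes fin: "finite P" and po: "strict_poset_on P lt" and "y \<in> P" "\<not> minimal_in P lt y"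
  shows "\<exists>z. covers P lt z y \<and> card {u \<in> P. lt u z} < card {u \<in> P. lt u y}"
proof -
  let ?S = "{z \<in> P. lt z y}" and ?f = "\<lambda>z. card {u \<in> P. lt u z}"
  obtain z0 where "z0 \<in> ?S"
    using assms(3,4) by (auto simp: minimal_in_def)
  moreover have "\<forall>z. z \<in> ?S \<longrightarrow> ?f z < card P + 1"
    using fin by (simp add: le_imp_less_Suc card_mono)
  ultimately have "\<exists>z. z \<in> ?S \<and> (\<forall>z'. z' \<in> ?S \<longrightarrow> ?f z' \<le> ?f z)"
    by (rule ex_has_greatest_nat)
  then obtain z where z: "z \<in> ?S" and zmax: "\<And>z'. z' \<in> ?S \<Longrightarrow> ?f z' \<le> ?f z"
    by blast
  have irr: "\<And>x. x \<in> P \<Longrightarrow> \<not> lt x x"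
    and trans: "\<And>x y z. x \<in> P \<Longrightarrow> y \<in> P \<Longrightarrow> z \<in> P \<Longrightarrow> lt x y \<Longrightarrow> lt y z \<Longrightarrow> lt x z"
    using po unfolding strict_poset_on_def by blast+
  have below: "?f z < ?f u" if "u \<in> P" "lt z u" for u
  proof (rule psubset_card_mono)
    have "z \<in> P"
      using z by simp
    have "{v \<in> P. lt v z} \<subseteq> {v \<in> P. lt v u}"
      using trans[OF _ \<open>z \<in> P\<close> \<open>u \<in> P\<close> _ \<open>lt z u\<close>] by blast
    moreover have "z \<in> {v \<in> P. lt v u} - {v \<in> P. lt v z}"
      using irr[OF \<open>z \<in> P\<close>] that \<open>z \<in> P\<close> by simp
    ultimately show "{v \<in> P. lt v z} \<subset> {v \<in> P. lt v u}"
      by blast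
  qed (use fin in simp)
  have "\<not> (lt z u \<and> lt u y)" if "u \<in> P" for u
    using below[OF that] zmax[of u] that by auto
  then have "covers P lt z y"
    unfolding covers_def using z assms(3) by blast
  moreover have "?f z < ?f y"
    using below[of y] z assms(3) by simp
  ultimately show ?thesis
    by blast
qed

lemma exists_sat_chain_to:
  assumes fin: "finite P" and po: "strict_poset_on P lt"
  shows "y \<in> P \<Longrightarrow> \<exists>c. sat_chain_from_min P lt c \<and> last c = y"
proof (induction "card {u \<in> P. lt u y}" arbitrary: y rule: less_induct)
  case less
  show ?case
  proof (cases "minimal_in P lt y")
    case True
    then show ?thesis
      by (intro exI[of _ "[y]"]) (simp add: sat_chain_from_min_def)
  next
    case False
    then obtain z where z: "covers P lt z y" "card {u \<in> P. lt u z} < card {u \<in> P. lt u y}"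
      using exists_cover_below[OF fin po less.prems] by blast
    then obtain c where c: "sat_chain_from_min P lt c" "last c = z"
      using less.hyps[of z] by (auto simp: covers_def)
    then have "sat_chain_from_min P lt (c @ [y])"
      using sat_chain_snoc[OF c(1)] z(1) by simp
    then show ?thesis
      by (intro exI[of _ "c @ [y]"]) simp
  qed
qed

lemma rho_maximal:
  assumes "finite P" "strict_poset_on P lt" "sign_graded_rank P lt \<omega> r" "maximal_in P lt y"
  shows "rho P lt \<omega> y = r"
proof -
  obtain c where "sat_chain_from_min P lt c" "last c = y"
    using exists_sat_chain_to[OF assms(1,2)] assms(4) by (auto simp: maximal_in_def)
  then show ?thesis
    by (rule rho_eqI) (use assms(3,4) in \<open>simp add: sign_graded_rank_def maximal_chain_def\<close>)
qed

lemma distinct_nonzero_JH: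
  assumes "canonical P lt \<omega>" "\<pi> \<in> JH P lt \<omega>"
  shows "distinct_nonzero \<pi>"
proof -
  have "\<omega> x \<noteq> 0" if "x \<in> P" for x
    using assms(1) that unfolding canonical_def by force
  then show ?thesis
    using assms(2) by (auto simp: JH_def distinct_nonzero_def)
qed

lemma JH_hd_minimal:
  assumes "\<pi> \<in> JH P lt \<omega>" "\<pi> \<noteq> []"
  obtains y where "minimal_in P lt y" "hd \<pi> = \<omega> y"
proof -
  have dist: "distinct \<pi>" and ord: "\<forall>x\<in>P. \<forall>y\<in>P. lt x y \<longrightarrow>
      (\<exists>i j. i < j \<and> j < length \<pi> \<and> \<pi> ! i = \<omega> x \<and> \<pi> ! j = \<omega> y)"
    using assms(1) by (simp_all add: JH_def)
  have "hd \<pi> \<in> \<omega> ` P"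
    using assms hd_in_set[of \<pi>] by (simp add: JH_def)
  then obtain y where y: "y \<in> P" "hd \<pi> = \<omega> y"
    by blast
  have "\<not> lt z y" if z: "z \<in> P" for z
  proof
    assume "lt z y"
    then obtain i j where "i < j" "j < length \<pi>" "\<pi> ! j = \<omega> y"
      using ord z y(1) by blast
    moreover have "\<pi> ! 0 = \<omega> y"
      using assms(2) y(2) by (simp add: hd_conv_nth)
    ultimately show False
      using nth_eq_iff_index_eq[OF dist, of 0 j] assms(2) by simp
  qed
  with y show ?thesis
    by (intro that) (auto simp: minimal_in_def)
qed

lemma JH_last_maximal:
  assumes "\<pi> \<in> JH P lt \<omega>" "\<pi> \<noteq> []"
  obtains y where "maximal_in P lt y" "last \<pi> = \<omega> y"
proof -
  have dist: "distinct \<pi>" and ord: "\<forall>x\<in>P. \<forall>y\<in>P. lt x y \<longrightarrow>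
      (\<exists>i j. i < j \<and> j < length \<pi> \<and> \<pi> ! i = \<omega> x \<and> \<pi> ! j = \<omega> y)"
    using assms(1) by (simp_all add: JH_def)
  have "last \<pi> \<in> \<omega> ` P"
    using assms last_in_set[of \<pi>] by (simp add: JH_def)
  then obtain y where y: "y \<in> P" "last \<pi> = \<omega> y"
    by blast
  have "\<not> lt y z" if z: "z \<in> P" for z
  proof
    assume "lt y z"
    then obtain i j where "i < j" "j < length \<pi>" "\<pi> ! i = \<omega> y"
      using ord z y(1) by blast
    moreover have "\<pi> ! (length \<pi> - 1) = \<omega> y"
      using assms(2) y(2) by (simp add: last_conv_nth)
    ultimately show False
      using nth_eq_iff_index_eq[OF dist, of i "length \<pi> - 1"] by simp
  qed
  with y show ?thesis
    by (intro that) (auto simp: maximal_in_def)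
qed

lemma hd_JH_neg:
  assumes "canonical P lt \<omega>" "\<pi> \<in> JH P lt \<omega>" "\<pi> \<noteq> []"
  shows "hd \<pi> < 0"
proof -
  obtain y where "minimal_in P lt y" "hd \<pi> = \<omega> y"
    using JH_hd_minimal[OF assms(2,3)] .
  then show ?thesis
    using assms(1) rho_minimal[of P lt y \<omega>] by (auto simp: canonical_def minimal_in_def)
qed

lemma last_JH_sign:
  assumes "finite P" "strict_poset_on P lt" "sign_graded_rank P lt \<omega> r" "canonical P lt \<omega>"
    and "\<pi> \<in> JH P lt \<omega>" "\<pi> \<noteq> []"
  shows "(r = 0 \<and> last \<pi> < 0) \<or> (r = 1 \<and> 0 < last \<pi>)"
proof -
  obtain y where "maximal_in P lt y" "last \<pi> = \<omega> y"
    using JH_last_maximal[OF assms(5,6)] .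
  then show ?thesis
    using assms(4) rho_maximal[OF assms(1-3)] by (auto simp: canonical_def maximal_in_def)
qed

lemma JH_word_properties:
  assumes "finite P" "P \<noteq> {}" "strict_poset_on P lt" "sign_graded_rank P lt \<omega> r" "canonical P lt \<omega>"
    and "\<pi> \<in> JH P lt \<omega>"
  shows "distinct_nonzero \<pi>" "\<pi> \<noteq> []" "set \<pi> = \<omega> ` P" "hd \<pi> < 0"
    and "(r = 0 \<and> last \<pi> < 0) \<or> (r = 1 \<and> 0 < last \<pi>)"
proof -
  show "set \<pi> = \<omega> ` P"
    using assms(6) by (simp add: JH_def)
  then show "\<pi> \<noteq> []"
    using assms(2) by auto
  then show "hd \<pi> < 0" "(r = 0 \<and> last \<pi> < 0) \<or> (r = 1 \<and> 0 < last \<pi>)"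
    using hd_JH_neg[OF assms(5,6)] last_JH_sign[OF assms(1,3-6)] by simp_all
  show "distinct_nonzero \<pi>"
    using distinct_nonzero_JH[OF assms(5,6)] .
qed

lemma card_double_letters_canonical:
  assumes "finite P" "P \<noteq> {}" "strict_poset_on P lt" "inj_on \<omega> P" "sign_graded_rank P lt \<omega> r"
    and "canonical P lt \<omega>" "\<pi> \<in> JH P lt \<omega>" "\<pi>h \<in> Orb P \<omega> \<pi>" "no_dd \<pi>h"
  shows "int (card P) - r - 1 - 2 * int (des \<pi>h) = int (card (double_letters \<pi>))"
proof -
  note \<pi> = JH_word_properties[OF assms(1-3,5-7)]
  have "length \<pi> = card P"
    using \<pi>(1,3) distinct_card card_image[OF assms(4)] by (metis distinct_nonzero_def)
  moreover have "double_descent_letters \<pi>h = {}"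
    using no_dd_Orb_iff[OF \<pi>(1,3) assms(8)] assms(9) by simp
  ultimately show ?thesis
    using card_double_letters_Orb[OF \<pi>(1-4) assms(8)] \<pi>(5) by auto
qed

lemma peak_Orb_rank_zero:
  assumes "finite P" "P \<noteq> {}" "strict_poset_on P lt" "sign_graded_rank P lt \<omega> 0"
    and "canonical P lt \<omega>" "\<pi> \<in> JH P lt \<omega>" "\<sigma> \<in> Orb P \<omega> \<pi>"
  shows "peak \<sigma> = peak \<pi>" and "no_dd \<sigma> \<Longrightarrow> peak \<pi> = des \<sigma>"
proof -
  note \<pi> = JH_word_properties[OF assms(1-6)]
  have "peak \<pi> = card (peak_letters \<pi>)"
    using peak_eq_card_peak_letters[OF \<pi>(1,2,4)] \<pi>(5) by simp
  then show "peak \<sigma> = peak \<pi>"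
    using peak_Orb[OF \<pi>(1-4) _ assms(7)] \<pi>(5) by simp
  show "no_dd \<sigma> \<Longrightarrow> peak \<pi> = des \<sigma>"
    using \<open>peak \<pi> = _\<close> des_Orb[OF \<pi>(1-3) assms(7)] no_dd_Orb_iff[OF \<pi>(1,3) assms(7)] \<pi>(5) by simp
qed

theorem theorem6p3:
  fixes P :: "'a set" and lt :: "'a \<Rightarrow> 'a \<Rightarrow> bool" and \<omega> :: "'a \<Rightarrow> int"
    and r :: int and \<pi> :: "int list"
  assumes "finite P" and "P \<noteq> {}" and "strict_poset_on P lt" and "inj_on \<omega> P"
    and "sign_graded_rank P lt \<omega> r" and "canonical P lt \<omega>"
    and "\<pi> \<in> JH P lt \<omega>"
  shows "(\<exists>\<pi>h\<in>Orb P \<omega> \<pi>. no_dd \<pi>h) \<and>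
    (\<forall>\<pi>h\<in>Orb P \<omega> \<pi>. no_dd \<pi>h \<longrightarrow>
        int (card P) - r - 1 - 2 * int (des \<pi>h) \<ge> 0 \<and>
        (\<forall>t::real. (\<Sum>\<sigma>\<in>Orb P \<omega> \<pi>. t ^ des \<sigma>) =
           t ^ des \<pi>h * (1 + t) ^ nat (int (card P) - r - 1 - 2 * int (des \<pi>h)))) \<and>
    (r = 0 \<longrightarrow>
       (\<forall>\<pi>'\<in>JH P lt \<omega>. \<forall>\<sigma>\<in>Orb P \<omega> \<pi>'. peak \<sigma> = peak \<pi>') \<and>
       (\<forall>\<pi>'\<in>JH P lt \<omega>. \<forall>\<pi>h\<in>Orb P \<omega> \<pi>'. no_dd \<pi>h \<longrightarrow> peak \<pi>' = des \<pi>h))"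
proof (intro conjI ballI impI allI)
  note \<pi> = JH_word_properties[OF assms(1-3,5-7)]
  note D = card_double_letters_canonical[OF assms]
  show "\<exists>\<pi>h\<in>Orb P \<omega> \<pi>. no_dd \<pi>h"
    using exists_no_dd_Orb[OF \<pi>(1,3)] .
  fix \<pi>h assume "\<pi>h \<in> Orb P \<omega> \<pi>" "no_dd \<pi>h"
  then show "int (card P) - r - 1 - 2 * int (des \<pi>h) \<ge> 0"
    using D by simp
  fix t :: real
  show "(\<Sum>\<sigma>\<in>Orb P \<omega> \<pi>. t ^ des \<sigma>) = t ^ des \<pi>h * (1 + t) ^ nat (int (card P) - r - 1 - 2 * int (des \<pi>h))"
    using des_generating_function_Orb[OF \<pi>(1-3) \<open>\<pi>h \<in> Orb P \<omega> \<pi>\<close>] D \<open>\<pi>h \<in> Orb P \<omega> \<pi>\<close> \<open>no_dd \<pi>h\<close>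
      no_dd_Orb_iff[OF \<pi>(1,3)] by simp
next
  assume "r = 0"
  fix \<pi>' \<sigma> assume "\<pi>' \<in> JH P lt \<omega>" "\<sigma> \<in> Orb P \<omega> \<pi>'"
  then show "peak \<sigma> = peak \<pi>'" and "no_dd \<sigma> \<Longrightarrow> peak \<pi>' = des \<sigma>"
    using peak_Orb_rank_zero[OF assms(1-3) _ assms(6)] assms(5) \<open>r = 0\<close> by simp_all
qed

end
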